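(* Consider the perturbed federated algorithm described in the context, run with parameter $\beta\in(0,1)$. Then for every round $t\ge 0$ and every local step $k\in\{0,\dots,E\}$, $$\sum_{i=1}^C p_i\,\widetilde{\mathbf{w}}_{t,k}^i=\beta\,\overline{\mathbf{w}}_{t,k}+(1-\beta)\,\overline{\mathbf{w}}_{t,0}.$$
   Context: There are $C$ clients with local objectives $F_i:\mathbb{R}^D\to\mathbb{R}$. Similarity weights $p_{in}\ge 0$ ($i,n\in\{1,\dots,C\}$) are symmetric ($p_{in}=p_{ni}$), satisfy $p_{ii}=0$, and $\sum_{i,n}p_{in}=1$. Set $p_i=\sum_{n=1}^C p_{in}$, which is assumed to be $>0$, so that $\sum_i p_i=1$. The algorithm has a parameter $\beta\in(0,1)$, a number $E\ge1$ of local steps and step sizes $\gamma_t>0$. All clients participate in every round. Given an initial point $\overline{\mathbf{w}}_{0,0}$, set $\mathbf{u}_0^i=\overline{\mathbf{w}}_{0,0}$ for all $i$. In round $t\ge0$, each client sets $\mathbf{w}_{t,0}^i=\overline{\mathbf{w}}_{t,0}$. For $k=0,\dots,E-1$ it forms the perturbed iterate $\widetilde{\mathbf{w}}_{t,k}^i=\beta\mathbf{w}_{t,k}^i+(1-\beta)\mathbf{u}_t^i$ and updates $\mathbf{w}_{t,k+1}^i=\mathbf{w}_{t,k}^i-\gamma_t\,g_i(\widetilde{\mathbf{w}}_{t,k}^i)$, where $g_i(\cdot)$ is a stochastic gradient of $F_i$. The perturbed iterate is defined by the same formula also for $k=E$. The average iterate is $\overline{\mathbf{w}}_{t,k}=\sum_i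 p_i\mathbf{w}_{t,k}^i$, and $\overline{\mathbf{w}}_{t+1,0}=\overline{\mathbf{w}}_{t,E}$. For $t\ge1$, $\mathbf{u}_t^i=\frac{1}{p_i}\sum_{n=1}^C p_{in}\mathbf{w}_{t-1,E}^n$. *)

theory Defs
  imports "HOL-Analysis.Analysis"
begin

end

theory Submission
  imports Defs
begin

text \<open>The perturbed iterate is a convex combination of the local iterate and the neighbourhood
  average, so its p-weighted sum splits accordingly. Since p is symmetric, averaging over
  neighbours with row-normalised weights preserves the p-weighted sum; hence the weighted sum of the
  neighbourhood averages equals the weighted sum of the previous round's final iterates, which is
  exactly the new global iterate.\<close>

lemma sum_scaleR_convex_combination:
  fixes c :: "'i \<Rightarrow> real" and x y :: "'i \<Rightarrow> 'a::real_vector"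
  shows "(\<Sum>i\<in>A. c i *\<^sub>R (\<beta> *\<^sub>R x i + (1 - \<beta>) *\<^sub>R y i))
    = \<beta> *\<^sub>R (\<Sum>i\<in>A. c i *\<^sub>R x i) + (1 - \<beta>) *\<^sub>R (\<Sum>i\<in>A. c i *\<^sub>R y i)"
  by (simp add: scaleR_right_distrib sum.distrib scaleR_sum_right mult.commute)

lemma sum_row_weighted_neighbour_average:
  fixes p :: "'i \<Rightarrow> 'i \<Rightarrow> real" and x :: "'i \<Rightarrow> 'a::real_vector"
  assumes sym: "\<And>i n. i \<in> A \<Longrightarrow> n \<in> A \<Longrightarrow> p i n = p n i"
    and row_nonzero: "\<And>i. i \<in> A \<Longrightarrow> (\<Sum>n\<in>A. p i n) \<noteq> 0"
  shows "(\<Sum>i\<in>A. (\<Sum>n\<in>A. p i n) *\<^sub>R ((1 / (\<Sum>n\<in>A. p i n)) *\<^sub>R (\<Sum>n\<in>A. p i n *\<^sub>R x n)))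
    = (\<Sum>n\<in>A. (\<Sum>i\<in>A. p n i) *\<^sub>R x n)"
proof -
  have "(\<Sum>i\<in>A. (\<Sum>n\<in>A. p i n) *\<^sub>R ((1 / (\<Sum>n\<in>A. p i n)) *\<^sub>R (\<Sum>n\<in>A. p i n *\<^sub>R x n)))
      = (\<Sum>i\<in>A. \<Sum>n\<in>A. p i n *\<^sub>R x n)"
    using row_nonzero by (intro sum.cong) auto
  also have "\<dots> = (\<Sum>n\<in>A. \<Sum>i\<in>A. p i n *\<^sub>R x n)"
    by (rule sum.swap)
  also have "\<dots> = (\<Sum>n\<in>A. (\<Sum>i\<in>A. p n i) *\<^sub>R x n)"
    using sym by (intro sum.cong) (auto simp: scaleR_sum_left)
  finally show ?thesis .
qed

theorem lemma1:
  fixes C E :: nat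
    and p :: "nat \<Rightarrow> nat \<Rightarrow> real"
    and \<beta> :: real
    and \<gamma> :: "nat \<Rightarrow> real"
    and g :: "nat \<Rightarrow> nat \<Rightarrow> nat \<Rightarrow> real ^ 'd \<Rightarrow> real ^ 'd"
    and w0 :: "real ^ 'd"
    and w :: "nat \<Rightarrow> nat \<Rightarrow> nat \<Rightarrow> real ^ 'd"
    and u :: "nat \<Rightarrow> nat \<Rightarrow> real ^ 'd"
  assumes p_nonneg: "\<And>i n. i \<in> {1..C} \<Longrightarrow> n \<in> {1..C} \<Longrightarrow> p i n \<ge> 0"
    and p_sym: "\<And>i n. i \<in> {1..C} \<Longrightarrow> n \<in> {1..C} \<Longrightarrow> p i n = p n i"
    and p_diag: "\<And>i. i \<in> {1..C} \<Longrightarrow> p i i = 0"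
    and p_sum: "(\<Sum>i=1..C. \<Sum>n=1..C. p i n) = 1"
    and p_pos: "\<And>i. i \<in> {1..C} \<Longrightarrow> (\<Sum>n=1..C. p i n) > 0"
    and beta: "0 < \<beta>" "\<beta> < 1"
    and E: "E \<ge> 1"
    and gamma: "\<And>t. \<gamma> t > 0"
    and u0: "\<And>i. i \<in> {1..C} \<Longrightarrow> u 0 i = w0"
    and w_init0: "\<And>i. i \<in> {1..C} \<Longrightarrow> w 0 0 i = w0"
    and w_init: "\<And>t i. i \<in> {1..C} \<Longrightarrow>
        w (Suc t) 0 i = (\<Sum>n=1..C. (\<Sum>m=1..C. p n m) *\<^sub>R w t E n)"
    and w_step: "\<And>t k i. i \<in> {1..C} \<Longrightarrow> k < E \<Longrightarrow>
        w t (Suc k) i = w t k i - \<gamma> t *\<^sub>R g t k i (\<beta> *\<^sub>R w t k i + (1 - \<beta>) *\<^sub>R u t i)"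
    and u_step: "\<And>t i. i \<in> {1..C} \<Longrightarrow>
        u (Suc t) i = (1 / (\<Sum>n=1..C. p i n)) *\<^sub>R (\<Sum>n=1..C. p i n *\<^sub>R w t E n)"
  shows "\<forall>t k. k \<le> E \<longrightarrow>
      (\<Sum>i=1..C. (\<Sum>n=1..C. p i n) *\<^sub>R (\<beta> *\<^sub>R w t k i + (1 - \<beta>) *\<^sub>R u t i))
      = \<beta> *\<^sub>R (\<Sum>i=1..C. (\<Sum>n=1..C. p i n) *\<^sub>R w t k i)
        + (1 - \<beta>) *\<^sub>R (\<Sum>i=1..C. (\<Sum>n=1..C. p i n) *\<^sub>R w t 0 i)"
proof -
  define P where "P i = (\<Sum>n=1..C. p i n)" for i
  have u_average: "(\<Sum>i=1..C. P i *\<^sub>R u t i) = (\<Sum>i=1..C. P i *\<^sub>R w t 0 i)" for t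
  proof (cases t)
    case 0
    then show ?thesis using u0 w_init0 by (auto intro: sum.cong)
  next
    case (Suc s)
    have "(\<Sum>n=1..C. p i n) \<noteq> 0" if "i \<in> {1..C}" for i
      using p_pos[OF that] by simp
    then have "(\<Sum>i=1..C. P i *\<^sub>R u t i) = (\<Sum>n=1..C. P n *\<^sub>R w s E n)"
      using sum_row_weighted_neighbour_average[of "{1..C}" p, OF p_sym] u_step
      unfolding Suc P_def by simp
    also have "\<dots> = (\<Sum>i=1..C. P i) *\<^sub>R (\<Sum>n=1..C. P n *\<^sub>R w s E n)"
      using p_sum unfolding P_def by simp
    also have "\<dots> = (\<Sum>i=1..C. P i *\<^sub>R w t 0 i)"
      using w_init unfolding Suc P_def scaleR_sum_left by (intro sum.cong) auto
    finally show ?thesis .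
  qed
  show ?thesis
    unfolding sum_scaleR_convex_combination u_average[unfolded P_def] by simp
qed

end
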